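(* Let $\mathbb{N}_\vee$ be the semigroup $\mathbb{N}$ with operation $m\vee n=\max\{m,n\}$, and for $n\in\mathbb{N}\cup\{\infty\}$ let $\phi_n\in\Delta(\ell^1(\mathbb{N}_\vee))$ be $\phi_n(\sum_i\alpha_i\delta_i)=\sum_{i=1}^n\alpha_i$. Then $\ell^1(\mathbb{N}_\vee)$ is approximately left character biprojective (in particular approximately left $\phi_\infty$-biprojective), but $\ell^1(\mathbb{N}_\vee)$ is not $\phi_\infty$-biprojective.
   Context: The characters of $\ell^1(\mathbb{N}_\vee)$ are exactly the $\phi_n$, $n\in\mathbb{N}\cup\{\infty\}$. For a Banach algebra $A$, $A\otimes_pA$ is the projective tensor product with $a\cdot(b\otimes c)=ab\otimes c$, $(b\otimes c)\cdot a=b\otimes ca$, $\pi_A(a\otimes b)=ab$. For a character $\phi$, $A$ is $\phi$-biprojective if there is a bounded $A$-bimodule morphism $\rho:A\to A\otimes_pA$ with $\phi(\pi_A(\rho(a)))=\phi(a)$ for all $a\in A$. $A$ is approximately left $\phi$-biprojective if there is a net $(\rho_\alpha)$ of bounded linear maps $A\to A\otimes_pA$ such that for all $a,x\in A$: $\|a\cdot\rho_\alpha(x)-\rho_\alpha(ax)\|\to0$, $\|\rho_\alpha(xa)-\phi(a)\rho_\alpha(x)\|\to0$, $\phi(\pi_A(\rho_\alpha(x)))-\phi(x)\to0$; approximately left character biprojective means this holds for every character. *)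

theory Defs
  imports "HOL-Analysis.Analysis"
begin

text \<open>
  The semigroup N_v = ({1,2,3,...}, max) is modelled on the type nat via the
  order isomorphism i \<mapsto> i+1; so index i :: nat stands for the paper's i+1.
  Elements of l^1(N_v) are absolutely summable functions nat \<Rightarrow> complex.
  The projective tensor product l^1(N_v) \<otimes>_p l^1(N_v) is modelled by its standard
  isometric realisation l^1(N_v \<times> N_v), with b \<otimes> c \<mapsto> (\<lambda>(i,j). b i * c j).
\<close>

definition l1 :: "(nat \<Rightarrow> complex) set" where
  "l1 = {f. (\<lambda>n. cmod (f n)) summable_on UNIV}"

definition l1norm :: "(nat \<Rightarrow> complex) \<Rightarrow> real" where
  "l1norm f = (\<Sum>\<^sub>\<infinity>n. cmod (f n))"

definition l1T :: "(nat \<times> nat \<Rightarrow> complex) set" where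
  "l1T = {F. (\<lambda>p. cmod (F p)) summable_on UNIV}"

definition l1Tnorm :: "(nat \<times> nat \<Rightarrow> complex) \<Rightarrow> real" where
  "l1Tnorm F = (\<Sum>\<^sub>\<infinity>p. cmod (F p))"

definition maxpairs :: "nat \<Rightarrow> (nat \<times> nat) set" where
  "maxpairs k = {(i, j). i \<le> k \<and> j \<le> k \<and> max i j = k}"

definition conv :: "(nat \<Rightarrow> complex) \<Rightarrow> (nat \<Rightarrow> complex) \<Rightarrow> nat \<Rightarrow> complex" where
  "conv f g k = (\<Sum>(i, j)\<in>maxpairs k. f i * g j)"

text \<open>Left module action a\<cdot>(b\<otimes>c) = ab\<otimes>c.\<close>
definition lact :: "(nat \<Rightarrow> complex) \<Rightarrow> (nat \<times> nat \<Rightarrow> complex) \<Rightarrow> nat \<times> nat \<Rightarrow> complex" where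
  "lact a F = (\<lambda>(k, l). \<Sum>(i, j)\<in>maxpairs k. a i * F (j, l))"

text \<open>Right module action (b\<otimes>c)\<cdot>a = b\<otimes>ca.\<close>
definition ract :: "(nat \<times> nat \<Rightarrow> complex) \<Rightarrow> (nat \<Rightarrow> complex) \<Rightarrow> nat \<times> nat \<Rightarrow> complex" where
  "ract F a = (\<lambda>(k, l). \<Sum>(j, i)\<in>maxpairs l. F (k, j) * a i)"

text \<open>Product map pi(b\<otimes>c) = bc.\<close>
definition piA :: "(nat \<times> nat \<Rightarrow> complex) \<Rightarrow> nat \<Rightarrow> complex" where
  "piA F k = (\<Sum>(i, j)\<in>maxpairs k. F (i, j))"

text \<open>phi_n for n \<in> N \<union> {\<infinity>}: Some n (n \<ge> 1) is phi_n, None is phi_\<infinity>.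
  phi_n(f) = sum of the first n coefficients (paper indices 1..n = our 0..n-1).\<close>
definition phi :: "nat option \<Rightarrow> (nat \<Rightarrow> complex) \<Rightarrow> complex" where
  "phi n f = (case n of Some m \<Rightarrow> (\<Sum>i<m. f i) | None \<Rightarrow> (\<Sum>\<^sub>\<infinity>i. f i))"

definition character :: "((nat \<Rightarrow> complex) \<Rightarrow> complex) \<Rightarrow> bool" where
  "character \<phi> \<longleftrightarrow>
     (\<forall>f\<in>l1. \<forall>g\<in>l1. \<phi> (\<lambda>n. f n + g n) = \<phi> f + \<phi> g) \<and>
     (\<forall>c. \<forall>f\<in>l1. \<phi> (\<lambda>n. c * f n) = c * \<phi> f) \<and>
     (\<forall>f\<in>l1. \<forall>g\<in>l1. \<phi> (conv f g) = \<phi> f * \<phi> g) \<and>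
     (\<exists>f\<in>l1. \<phi> f \<noteq> 0)"

definition bdd_lin :: "((nat \<Rightarrow> complex) \<Rightarrow> (nat \<times> nat \<Rightarrow> complex)) \<Rightarrow> bool" where
  "bdd_lin \<rho> \<longleftrightarrow>
     (\<forall>f\<in>l1. \<rho> f \<in> l1T) \<and>
     (\<forall>f\<in>l1. \<forall>g\<in>l1. \<rho> (\<lambda>n. f n + g n) = (\<lambda>p. \<rho> f p + \<rho> g p)) \<and>
     (\<forall>c. \<forall>f\<in>l1. \<rho> (\<lambda>n. c * f n) = (\<lambda>p. c * \<rho> f p)) \<and>
     (\<exists>C. \<forall>f\<in>l1. l1Tnorm (\<rho> f) \<le> C * l1norm f)"

definition phi_biprojective :: "((nat \<Rightarrow> complex) \<Rightarrow> complex) \<Rightarrow> bool" where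
  "phi_biprojective \<phi> \<longleftrightarrow>
     (\<exists>\<rho>. bdd_lin \<rho> \<and>
        (\<forall>a\<in>l1. \<forall>x\<in>l1. \<rho> (conv a x) = lact a (\<rho> x) \<and> \<rho> (conv x a) = ract (\<rho> x) a) \<and>
        (\<forall>a\<in>l1. \<phi> (piA (\<rho> a)) = \<phi> a))"

text \<open>A net of maps is encoded as a proper filter on the space of maps
  (the image filter of the net); the net consists of bounded linear maps.\<close>
definition approx_left_phi_biprojective :: "((nat \<Rightarrow> complex) \<Rightarrow> complex) \<Rightarrow> bool" where
  "approx_left_phi_biprojective \<phi> \<longleftrightarrow>
     (\<exists>F :: ((nat \<Rightarrow> complex) \<Rightarrow> (nat \<times> nat \<Rightarrow> complex)) filter.
        F \<noteq> bot \<and> eventually bdd_lin F \<and>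
        (\<forall>a\<in>l1. \<forall>x\<in>l1.
           ((\<lambda>\<rho>. l1Tnorm (\<lambda>p. lact a (\<rho> x) p - \<rho> (conv a x) p)) \<longlongrightarrow> 0) F \<and>
           ((\<lambda>\<rho>. l1Tnorm (\<lambda>p. \<rho> (conv x a) p - \<phi> a * \<rho> x p)) \<longlongrightarrow> 0) F \<and>
           ((\<lambda>\<rho>. \<phi> (piA (\<rho> x)) - \<phi> x) \<longlongrightarrow> 0) F))"

definition approx_left_character_biprojective :: bool where
  "approx_left_character_biprojective \<longleftrightarrow>
     (\<forall>\<phi>. character \<phi> \<longrightarrow> approx_left_phi_biprojective \<phi>)"

end

theory Submission
  imports Defs
begin

text \<open>
  Taking partial sums \<open>psum f K = f 0 + \<dots> + f K\<close> turns the max-convolution of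
  \<open>\<ell>\<^sup>1(\<nat>\<^sub>\<or>)\<close> into the pointwise product of sequences. Each \<open>\<delta>\<^sub>i\<close> is idempotent, so a
  character \<open>\<phi>\<close> sends it to 0 or 1, and \<open>\<phi>(\<delta>\<^sub>0) = 1\<close>. If \<open>\<phi>(\<delta>\<^sub>m) = 1\<close> and
  \<open>\<phi>(\<delta>\<^sub>m\<^sub>+\<^sub>1) = 0\<close>, then \<open>e = \<delta>\<^sub>m - \<delta>\<^sub>m\<^sub>+\<^sub>1\<close> satisfies \<open>a e = psum a m \<cdot> e\<close>, so \<open>\<phi>(a) = psum a m\<close>
  and \<open>a e = \<phi>(a) e\<close>. Otherwise \<open>\<phi>\<close> is the full sum, since an element whose partial sums
  stay away from 0 is invertible, and then \<open>a \<delta>\<^sub>N - \<phi>(a) \<delta>\<^sub>N \<rightarrow> 0\<close>. Such approximate means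
  \<open>e\<^sub>N\<close> give the net \<open>\<rho>\<^sub>N(x) = x e\<^sub>N \<otimes> \<delta>\<^sub>0\<close>.

  For \<open>\<phi>\<^sub>\<infinity>\<close>-biprojectivity, \<open>G = \<rho>(\<delta>\<^sub>0)\<close> must satisfy \<open>\<delta>\<^sub>j\<cdot>G = G\<cdot>\<delta>\<^sub>j\<close>, which forces
  \<open>\<Sum>\<^sub>i\<^sub>\<le>\<^sub>j G(i,l) = 0\<close> for \<open>l < j\<close>. Then the \<open>K\<close>-th partial sum of \<open>\<pi>(G)\<close> is the sum of the
  last column of the \<open>K \<times> K\<close> square of the summable array \<open>G\<close>, which tends to 0,
  whereas \<open>\<phi>\<^sub>\<infinity>(\<pi>(G)) = \<phi>\<^sub>\<infinity>(\<delta>\<^sub>0) = 1\<close>.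
\<close>

definition psum :: "(nat \<Rightarrow> 'a::comm_monoid_add) \<Rightarrow> nat \<Rightarrow> 'a" where
  "psum f K = (\<Sum>i\<le>K. f i)"

definition delta :: "nat \<Rightarrow> nat \<Rightarrow> complex" where
  "delta i = (\<lambda>n. if n = i then 1 else 0)"

definition tensor :: "(nat \<Rightarrow> complex) \<Rightarrow> (nat \<Rightarrow> complex) \<Rightarrow> nat \<times> nat \<Rightarrow> complex" where
  "tensor f g = (\<lambda>(k, l). f k * g l)"

lemma delta_apply: "delta i n = (if n = i then 1 else 0)"
  by (simp add: delta_def)

lemma maxpairs_eq: "maxpairs k = ({k} \<times> {..k}) \<union> ({..<k} \<times> {k})"
  unfolding maxpairs_def by auto

lemma finite_maxpairs [simp]: "finite (maxpairs k)"
  unfolding maxpairs_eq by auto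

lemma sum_maxpairs: "(\<Sum>p\<in>maxpairs k. H p) = (\<Sum>j\<le>k. H (k, j)) + (\<Sum>i<k. H (i, k))"
proof -
  have "(\<Sum>p\<in>maxpairs k. H p) = (\<Sum>p\<in>{k} \<times> {..k}. H p) + (\<Sum>p\<in>{..<k} \<times> {k}. H p)"
    unfolding maxpairs_eq by (rule sum.union_disjoint) auto
  moreover have "{k} \<times> {..k} = (\<lambda>j. (k, j)) ` {..k}" "{..<k} \<times> {k} = (\<lambda>i. (i, k)) ` {..<k}"
    by auto
  ultimately show ?thesis
    by (simp add: sum.reindex inj_on_def)
qed

lemma sum_sum_maxpairs: "(\<Sum>k\<le>K. \<Sum>p\<in>maxpairs k. H p) = (\<Sum>p\<in>{..K} \<times> {..K}. H p)"
proof -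
  have "{..K} \<times> {..K} = (\<Union>k\<le>K. maxpairs k)"
    unfolding maxpairs_def by auto
  moreover have "maxpairs i \<inter> maxpairs j = {}" if "i \<noteq> j" for i j
    using that unfolding maxpairs_def by auto
  ultimately show ?thesis
    by (simp add: sum.UNION_disjoint)
qed

subsection \<open>Partial sums\<close>

lemma psum_conv: "psum (conv f g) K = psum f K * psum g K"
  unfolding psum_def conv_def
  by (simp add: sum_sum_maxpairs sum_product sum.cartesian_product case_prod_beta)

lemma psum_inject:
  fixes f g :: "nat \<Rightarrow> 'a::ab_group_add"
  assumes "\<And>K. psum f K = psum g K"
  shows "f = g"
proof
  fix k show "f k = g k"
  proof (cases k)
    case 0
    then show ?thesis using assms[of 0] by (simp add: psum_def)
  next
    case (Suc m)
    then have "f k = psum f k - psum f m" "g k = psum g k - psum g m"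
      by (simp_all add: psum_def)
    then show ?thesis using assms by simp
  qed
qed

lemma psum_delta: "psum (delta i) K = (if i \<le> K then 1 else 0)"
  unfolding psum_def delta_def by auto

lemma psum_add: "psum (\<lambda>n. f n + g n) K = psum f K + psum g K"
  unfolding psum_def by (simp add: sum.distrib)

lemma psum_diff: "psum (\<lambda>n. f n - g n) K = psum f K - psum (g :: nat \<Rightarrow> 'a::ab_group_add) K"
  unfolding psum_def by (simp add: sum_subtractf)

lemma psum_cmult: "psum (\<lambda>n. c * f n) K = c * psum (f :: nat \<Rightarrow> 'a::comm_semiring_0) K"
  unfolding psum_def by (simp add: sum_distrib_left)

lemma conv_assoc: "conv a (conv x e) = conv (conv a x) e"
  by (rule psum_inject) (simp add: psum_conv mult.assoc)

lemma conv_delta_zero_right: "conv x (delta 0) = x"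
  by (rule psum_inject) (simp add: psum_conv psum_delta)

lemma conv_delta_delta: "conv (delta i) (delta j) = delta (max i j)"
  by (rule psum_inject) (simp add: psum_conv psum_delta)

lemma conv_add_left: "conv (\<lambda>n. f n + g n) e = (\<lambda>k. conv f e k + conv g e k)"
  unfolding conv_def by (simp add: case_prod_beta ring_distribs sum.distrib)

lemma conv_cmult_left: "conv (\<lambda>n. c * f n) e = (\<lambda>k. c * conv f e k)"
  unfolding conv_def by (simp add: case_prod_beta sum_distrib_left mult.assoc)

lemma conv_delta_right:
  "conv a (delta N) k = (if k < N then 0 else if k = N then psum a N else a k)"
proof -
  have "conv a (delta N) k = a k * psum (delta N) k + (\<Sum>i<k. a i) * delta N k"
    unfolding conv_def psum_def
    by (simp add: sum_maxpairs case_prod_beta sum_distrib_left sum_distrib_right)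
  then show ?thesis
    by (auto simp: psum_delta delta_def psum_def lessThan_Suc_atMost[symmetric])
qed

lemma lact_tensor: "lact a (tensor f g) = tensor (conv a f) g"
  unfolding lact_def tensor_def conv_def
  by (auto simp: case_prod_beta sum_distrib_right mult.assoc intro!: ext)

lemma piA_tensor: "piA (tensor f g) = conv f g"
  unfolding piA_def tensor_def conv_def by (auto simp: case_prod_beta intro!: ext)

lemma l1_finite_sums_bounded:
  fixes h :: "nat \<Rightarrow> complex"
  assumes "\<And>K. (\<Sum>k\<le>K. cmod (h k)) \<le> B"
  shows "h \<in> l1" "l1norm h \<le> B"
proof -
  have fin: "(\<Sum>k\<in>F. cmod (h k)) \<le> B" if "finite F" for F
  proof -
    have "F \<subseteq> {..Max (insert 0 F)}"
      using that by auto
    then have "(\<Sum>k\<in>F. cmod (h k)) \<le> (\<Sum>k\<le>Max (insert 0 F). cmod (h k))"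
      by (intro sum_mono2) auto
    then show ?thesis using assms[of "Max (insert 0 F)"] by linarith
  qed
  have s: "(\<lambda>k. cmod (h k)) summable_on UNIV"
    by (rule nonneg_bdd_above_summable_on) (auto intro!: bdd_aboveI[where M=B] fin)
  then show "h \<in> l1" unfolding l1_def by simp
  show "l1norm h \<le> B" unfolding l1norm_def
    by (rule infsum_le_finite_sums[OF s]) (use fin in auto)
qed

lemma l1T_finite_sums_bounded:
  fixes h :: "nat \<times> nat \<Rightarrow> complex"
  assumes "\<And>K. (\<Sum>p\<in>{..K} \<times> {..K}. cmod (h p)) \<le> B"
  shows "h \<in> l1T" "l1Tnorm h \<le> B"
proof -
  have fin: "(\<Sum>p\<in>F. cmod (h p)) \<le> B" if "finite F" for F
  proof -
    define M where "M = Max (fst ` F \<union> snd ` F \<union> {0})"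
    have "F \<subseteq> {..M} \<times> {..M}"
      unfolding M_def using that by (force intro: Max_ge)
    then have "(\<Sum>p\<in>F. cmod (h p)) \<le> (\<Sum>p\<in>{..M} \<times> {..M}. cmod (h p))"
      by (intro sum_mono2) auto
    then show ?thesis using assms[of M] by linarith
  qed
  have s: "(\<lambda>p. cmod (h p)) summable_on UNIV"
    by (rule nonneg_bdd_above_summable_on) (auto intro!: bdd_aboveI[where M=B] fin)
  then show "h \<in> l1T" unfolding l1T_def by simp
  show "l1Tnorm h \<le> B" unfolding l1Tnorm_def
    by (rule infsum_le_finite_sums[OF s]) (use fin in auto)
qed

lemma sum_norm_le_l1norm: "f \<in> l1 \<Longrightarrow> (\<Sum>k\<le>K. cmod (f k)) \<le> l1norm f"
  unfolding l1_def l1norm_def by (rule finite_sum_le_infsum) auto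

lemma l1norm_nonneg: "0 \<le> l1norm f"
  unfolding l1norm_def by (rule infsum_nonneg) auto

lemma l1Tnorm_nonneg: "0 \<le> l1Tnorm F"
  unfolding l1Tnorm_def by (rule infsum_nonneg) auto

lemma l1_add_cmult:
  assumes "f \<in> l1" "g \<in> l1"
  shows "(\<lambda>n. f n + c * g n) \<in> l1"
proof (rule l1_finite_sums_bounded(1))
  fix K
  have "(\<Sum>k\<le>K. cmod (f k + c * g k)) \<le> (\<Sum>k\<le>K. cmod (f k) + cmod c * cmod (g k))"
    by (intro sum_mono) (metis norm_mult norm_triangle_ineq)
  also have "\<dots> = (\<Sum>k\<le>K. cmod (f k)) + cmod c * (\<Sum>k\<le>K. cmod (g k))"
    by (simp add: sum.distrib sum_distrib_left)
  also have "\<dots> \<le> l1norm f + cmod c * l1norm g"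
    using sum_norm_le_l1norm[OF assms(1), of K] sum_norm_le_l1norm[OF assms(2), of K]
    by (intro add_mono mult_left_mono) auto
  finally show "(\<Sum>k\<le>K. cmod (f k + c * g k)) \<le> l1norm f + cmod c * l1norm g" .
qed

lemma l1_add: "f \<in> l1 \<Longrightarrow> g \<in> l1 \<Longrightarrow> (\<lambda>n. f n + g n) \<in> l1"
  using l1_add_cmult[of f g 1] by simp

lemma l1_diff: "f \<in> l1 \<Longrightarrow> g \<in> l1 \<Longrightarrow> (\<lambda>n. f n - g n) \<in> l1"
  using l1_add_cmult[of f g "-1"] by simp

lemma l1_cmult: "g \<in> l1 \<Longrightarrow> (\<lambda>n. c * g n) \<in> l1"
  using l1_add_cmult[of "\<lambda>n. 0" g c] l1_finite_sums_bounded(1)[of "\<lambda>n. 0" 0] by simp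

lemma delta_in_l1: "delta i \<in> l1" and l1norm_delta_le: "l1norm (delta i) \<le> 1"
proof -
  have "(\<Sum>k\<le>K. cmod (delta i k)) \<le> 1" for K
    unfolding delta_def by (cases "i \<le> K") (auto simp: if_distrib sum.If_cases)
  then show "delta i \<in> l1" "l1norm (delta i) \<le> 1"
    using l1_finite_sums_bounded by blast+
qed

lemma conv_in_l1:
  assumes "f \<in> l1" "g \<in> l1"
  shows "conv f g \<in> l1" "l1norm (conv f g) \<le> l1norm f * l1norm g"
proof -
  have "(\<Sum>k\<le>K. cmod (conv f g k)) \<le> l1norm f * l1norm g" for K
  proof -
    have "(\<Sum>k\<le>K. cmod (conv f g k))
        \<le> (\<Sum>k\<le>K. \<Sum>p\<in>maxpairs k. cmod (f (fst p)) * cmod (g (snd p)))"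
      unfolding conv_def
      by (intro sum_mono order_trans[OF norm_sum]) (auto simp: case_prod_beta norm_mult)
    also have "\<dots> = (\<Sum>k\<le>K. cmod (f k)) * (\<Sum>k\<le>K. cmod (g k))"
      by (simp add: sum_sum_maxpairs sum_product sum.cartesian_product case_prod_beta)
    also have "\<dots> \<le> l1norm f * l1norm g"
      using sum_norm_le_l1norm[OF assms(1), of K] sum_norm_le_l1norm[OF assms(2), of K]
      by (intro mult_mono) (auto simp: sum_nonneg l1norm_nonneg)
    finally show ?thesis .
  qed
  then show "conv f g \<in> l1" "l1norm (conv f g) \<le> l1norm f * l1norm g"
    using l1_finite_sums_bounded by blast+
qed

lemma tensor_in_l1T:
  assumes "f \<in> l1" "g \<in> l1"
  shows "tensor f g \<in> l1T" "l1Tnorm (tensor f g) \<le> l1norm f * l1norm g"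
proof -
  have "(\<Sum>p\<in>{..K} \<times> {..K}. cmod (tensor f g p)) \<le> l1norm f * l1norm g" for K
  proof -
    have "(\<Sum>p\<in>{..K} \<times> {..K}. cmod (tensor f g p)) = (\<Sum>k\<le>K. cmod (f k)) * (\<Sum>k\<le>K. cmod (g k))"
      by (simp add: tensor_def sum_product sum.cartesian_product case_prod_beta norm_mult)
    also have "\<dots> \<le> l1norm f * l1norm g"
      using sum_norm_le_l1norm[OF assms(1), of K] sum_norm_le_l1norm[OF assms(2), of K]
      by (intro mult_mono) (auto simp: sum_nonneg l1norm_nonneg)
    finally show ?thesis .
  qed
  then show "tensor f g \<in> l1T" "l1Tnorm (tensor f g) \<le> l1norm f * l1norm g"
    using l1T_finite_sums_bounded by blast+
qed

lemma l1_summable_on: "f \<in> l1 \<Longrightarrow> f summable_on UNIV"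
  unfolding l1_def by (rule abs_summable_summable) simp

lemma psum_tendsto_infsum:
  assumes "f summable_on (UNIV :: nat set)"
  shows "psum f \<longlonglongrightarrow> infsum f UNIV"
proof -
  have "f sums infsum f UNIV"
    using assms by (intro has_sum_imp_sums has_sum_infsum)
  then have "(\<lambda>n. \<Sum>i<Suc n. f i) \<longlonglongrightarrow> infsum f UNIV"
    unfolding sums_def by (rule LIMSEQ_Suc)
  then show ?thesis
    unfolding psum_def lessThan_Suc_atMost by (simp add: fun_eq_iff)
qed

lemma l1_tail_tendsto_zero:
  assumes "a \<in> l1"
  shows "(\<lambda>N. l1norm a - (\<Sum>k\<le>N. cmod (a k))) \<longlonglongrightarrow> 0"
proof -
  have "psum (\<lambda>n. cmod (a n)) \<longlonglongrightarrow> l1norm a"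
    unfolding l1norm_def by (rule psum_tendsto_infsum) (use assms in \<open>simp add: l1_def\<close>)
  then have "(\<lambda>N. l1norm a - psum (\<lambda>n. cmod (a n)) N) \<longlonglongrightarrow> l1norm a - l1norm a"
    by (intro tendsto_diff tendsto_const)
  then show ?thesis
    unfolding psum_def by simp
qed

lemma sum_tail_le_l1norm:
  assumes "a \<in> l1"
  shows "(\<Sum>k\<le>K. if N < k then cmod (a k) else 0) \<le> l1norm a - (\<Sum>k\<le>N. cmod (a k))"
proof -
  define M where "M = K + N"
  have "(\<Sum>k\<le>K. if N < k then cmod (a k) else 0) \<le> (\<Sum>k\<le>M. if N < k then cmod (a k) else 0)"
    by (rule sum_mono2) (auto simp: M_def)
  moreover have "(\<Sum>k\<le>M. cmod (a k))
      = (\<Sum>k\<le>M. if N < k then cmod (a k) else 0) + (\<Sum>k\<le>M. if N < k then 0 else cmod (a k))"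
    by (simp add: sum.distrib[symmetric] if_distrib) (rule sum.cong, auto)
  moreover have "(\<Sum>k\<le>M. if N < k then 0 else cmod (a k)) = (\<Sum>k\<le>N. cmod (a k))"
    by (rule sum.mono_neutral_cong_right) (auto simp: M_def)
  moreover have "(\<Sum>k\<le>M. cmod (a k)) \<le> l1norm a"
    by (rule sum_norm_le_l1norm[OF assms])
  ultimately show ?thesis by linarith
qed

subsection \<open>Characters\<close>

lemma character_add: "character \<phi> \<Longrightarrow> f \<in> l1 \<Longrightarrow> g \<in> l1 \<Longrightarrow> \<phi> (\<lambda>n. f n + g n) = \<phi> f + \<phi> g"
  unfolding character_def by blast

lemma character_cmult: "character \<phi> \<Longrightarrow> f \<in> l1 \<Longrightarrow> \<phi> (\<lambda>n. c * f n) = c * \<phi> f"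
  unfolding character_def by blast

lemma character_conv: "character \<phi> \<Longrightarrow> f \<in> l1 \<Longrightarrow> g \<in> l1 \<Longrightarrow> \<phi> (conv f g) = \<phi> f * \<phi> g"
  unfolding character_def by blast

lemma character_diff:
  assumes "character \<phi>" "f \<in> l1" "g \<in> l1"
  shows "\<phi> (\<lambda>n. f n - g n) = \<phi> f - \<phi> g"
proof -
  have "\<phi> (\<lambda>n. f n + (-1) * g n) = \<phi> f + \<phi> (\<lambda>n. (-1) * g n)"
    using assms by (intro character_add l1_cmult) auto
  then show ?thesis
    using character_cmult[OF assms(1,3), of "-1"] by simp
qed

lemma character_delta_zero: assumes "character \<phi>" shows "\<phi> (delta 0) = 1"
proof -
  obtain f where f: "f \<in> l1" "\<phi> f \<noteq> 0"
    using assms unfolding character_def by blast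
  have "\<phi> f = \<phi> f * \<phi> (delta 0)"
    using character_conv[OF assms f(1) delta_in_l1, of 0] conv_delta_zero_right[of f] by simp
  then show ?thesis using f(2) by simp
qed

lemma character_delta_0_or_1:
  assumes "character \<phi>" shows "\<phi> (delta i) = 0 \<or> \<phi> (delta i) = 1"
proof -
  have "\<phi> (delta i) = \<phi> (delta i) * \<phi> (delta i)"
    using character_conv[OF assms delta_in_l1 delta_in_l1, of i i] conv_delta_delta by simp
  then show ?thesis
    by (metis mult_cancel_left2 mult_eq_0_iff)
qed

lemma character_delta_cases:
  assumes "character \<phi>"
  obtains "\<And>i. \<phi> (delta i) = 1" | m where "\<phi> (delta m) = 1" "\<phi> (delta (Suc m)) = 0"
proof (cases "\<forall>i. \<phi> (delta i) = 1")
  case False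
  then have ex: "\<exists>i. \<phi> (delta i) = 0"
    using character_delta_0_or_1[OF assms] by blast
  define n where "n = (LEAST i. \<phi> (delta i) = 0)"
  have n: "\<phi> (delta n) = 0"
    unfolding n_def by (rule LeastI_ex[OF ex])
  then obtain m where m: "n = Suc m"
    using character_delta_zero[OF assms] by (cases n) auto
  then have "\<phi> (delta m) \<noteq> 0"
    using not_less_Least[of m "\<lambda>i. \<phi> (delta i) = 0"] n_def by auto
  then have "\<phi> (delta m) = 1"
    using character_delta_0_or_1[OF assms] by blast
  then show thesis using that(2) n m by blast
qed (use that in blast)

text \<open>The inverse has partial sums \<open>1 / psum x K\<close>, so its coefficients are
  \<open>-x\<^sub>k / (psum x k \<cdot> psum x (k - 1))\<close>.\<close>

lemma l1_invertible_if_psum_bounded_below: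
  assumes x: "x \<in> l1" and eps: "0 < \<epsilon>" and bd: "\<And>K. \<epsilon> \<le> cmod (psum x K)"
  obtains z where "z \<in> l1" "conv x z = delta 0"
proof -
  have nz: "psum x K \<noteq> 0" for K
    using bd[of K] eps by auto
  define z where "z = (\<lambda>k. 1 / psum x k - (if k = 0 then 0 else 1 / psum x (k - 1)))"
  have psum_z: "psum z K = 1 / psum x K" for K
    by (induction K) (simp_all add: psum_def z_def)
  have z_bound: "cmod (z k) \<le> cmod (x k) / \<epsilon>\<^sup>2" for k
  proof (cases k)
    case 0
    have e0: "\<epsilon> \<le> cmod (x 0)"
      using bd[of 0] by (simp add: psum_def)
    then have "\<epsilon> * \<epsilon> \<le> cmod (x 0) * cmod (x 0)"
      using eps by (intro mult_mono) auto
    then have "1 / cmod (x 0) \<le> cmod (x 0) / \<epsilon>\<^sup>2"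
      using e0 eps by (simp add: divide_simps power2_eq_square)
    then show ?thesis
      using 0 by (simp add: z_def psum_def norm_divide)
  next
    case (Suc m)
    have "z k = - x k / (psum x k * psum x m)"
      using nz[of k] nz[of m] Suc by (simp add: z_def psum_def field_simps)
    then have "cmod (z k) = cmod (x k) / (cmod (psum x k) * cmod (psum x m))"
      by (simp add: norm_mult norm_divide)
    also have "\<dots> \<le> cmod (x k) / (\<epsilon> * \<epsilon>)"
      using eps bd[of k] bd[of m] by (intro divide_left_mono mult_mono mult_pos_pos) auto
    finally show ?thesis by (simp add: power2_eq_square)
  qed
  have "z \<in> l1"
  proof (rule l1_finite_sums_bounded(1))
    fix K
    have "(\<Sum>k\<le>K. cmod (z k)) \<le> (\<Sum>k\<le>K. cmod (x k)) / \<epsilon>\<^sup>2"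
      unfolding sum_divide_distrib by (intro sum_mono z_bound)
    also have "\<dots> \<le> l1norm x / \<epsilon>\<^sup>2"
      using sum_norm_le_l1norm[OF x] eps by (intro divide_right_mono) auto
    finally show "(\<Sum>k\<le>K. cmod (z k)) \<le> l1norm x / \<epsilon>\<^sup>2" .
  qed
  moreover have "conv x z = delta 0"
    by (rule psum_inject) (simp add: psum_conv psum_z psum_delta nz)
  ultimately show thesis by (rule that)
qed

lemma character_nonzero_if_psum_bounded_below:
  assumes "character \<phi>" "x \<in> l1" "0 < \<epsilon>" "\<And>K. \<epsilon> \<le> cmod (psum x K)"
  shows "\<phi> x \<noteq> 0"
proof
  assume "\<phi> x = 0"
  obtain z where z: "z \<in> l1" "conv x z = delta 0"
    using l1_invertible_if_psum_bounded_below assms(2-4) .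
  then have "\<phi> (delta 0) = 0"
    using character_conv[OF assms(1,2) z(1)] \<open>\<phi> x = 0\<close> by simp
  then show False
    using character_delta_zero[OF assms(1)] by simp
qed

text \<open>If \<open>\<phi>(c) = \<mu> \<noteq> \<Sum> c\<close>, then \<open>x = (c - \<mu> \<delta>\<^sub>0) \<delta>\<^sub>N + \<delta>\<^sub>0 - \<delta>\<^sub>N\<close> lies in the kernel of \<open>\<phi>\<close>,
  while for large \<open>N\<close> its partial sums (1 below \<open>N\<close>, \<open>psum c K - \<mu>\<close> from \<open>N\<close> on) stay
  away from 0.\<close>

lemma character_eq_infsum:
  assumes ch: "character \<phi>" and all1: "\<And>i. \<phi> (delta i) = 1" and c: "c \<in> l1"
  shows "\<phi> c = infsum c UNIV"
proof (rule ccontr)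
  define \<mu> L where "\<mu> = \<phi> c" and "L = infsum c UNIV"
  assume "\<phi> c \<noteq> infsum c UNIV"
  then have r: "0 < cmod (L - \<mu>) / 2"
    unfolding \<mu>_def L_def by simp
  obtain N where N: "\<And>K. N \<le> K \<Longrightarrow> cmod (psum c K - L) < cmod (L - \<mu>) / 2"
    using psum_tendsto_infsum[OF l1_summable_on[OF c]] r unfolding LIMSEQ_iff L_def by blast
  define c' where "c' = (\<lambda>k. c k - \<mu> * delta 0 k)"
  define x where "x = (\<lambda>k. conv c' (delta N) k + (delta 0 k - delta N k))"
  have c': "c' \<in> l1" "\<phi> c' = 0"
    unfolding c'_def \<mu>_def
    using character_diff[OF ch c l1_cmult[OF delta_in_l1]]
      character_cmult[OF ch delta_in_l1] character_delta_zero[OF ch]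
    by (auto intro!: l1_diff l1_cmult c delta_in_l1)
  have x: "x \<in> l1"
    unfolding x_def by (intro l1_add l1_diff conv_in_l1 c' delta_in_l1)
  have kernel: "\<phi> x = 0"
    unfolding x_def
    using character_add[OF ch conv_in_l1(1)[OF c'(1) delta_in_l1] l1_diff[OF delta_in_l1 delta_in_l1]]
      character_conv[OF ch c'(1) delta_in_l1] character_diff[OF ch delta_in_l1 delta_in_l1]
      c'(2) all1
    by simp
  have bound: "min 1 (cmod (L - \<mu>) / 2) \<le> cmod (psum x K)" for K
  proof (cases "K < N")
    case False
    have "cmod (L - \<mu>) \<le> cmod (psum c K - \<mu>) + cmod (psum c K - L)"
      using norm_triangle_ineq4[of "psum c K - \<mu>" "psum c K - L"] by simp
    then show ?thesis
      using N[of K] False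
      by (simp add: x_def c'_def psum_add psum_diff psum_cmult psum_conv psum_delta)
  qed (simp add: x_def c'_def psum_add psum_diff psum_cmult psum_conv psum_delta)
  have "\<phi> x \<noteq> 0"
    by (rule character_nonzero_if_psum_bounded_below[OF ch x _ bound]) (use r in simp)
  then show False
    using kernel by simp
qed

subsection \<open>Approximate biprojectivity from approximate means\<close>

definition splitting :: "(nat \<Rightarrow> complex) \<Rightarrow> (nat \<Rightarrow> complex) \<Rightarrow> nat \<times> nat \<Rightarrow> complex" where
  "splitting e x = tensor (conv x e) (delta 0)"

lemma bdd_lin_splitting:
  assumes "e \<in> l1"
  shows "bdd_lin (splitting e)"
  unfolding bdd_lin_def
proof (intro conjI ballI allI)
  fix f assume f: "f \<in> l1"
  show "splitting e f \<in> l1T"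
    unfolding splitting_def by (intro tensor_in_l1T conv_in_l1 f assms delta_in_l1)
next
  fix f g
  show "splitting e (\<lambda>n. f n + g n) = (\<lambda>p. splitting e f p + splitting e g p)"
    unfolding splitting_def conv_add_left tensor_def by (auto simp: ring_distribs)
next
  fix c f
  show "splitting e (\<lambda>n. c * f n) = (\<lambda>p. c * splitting e f p)"
    unfolding splitting_def conv_cmult_left tensor_def by auto
next
  show "\<exists>C. \<forall>f\<in>l1. l1Tnorm (splitting e f) \<le> C * l1norm f"
  proof (intro exI ballI)
    fix f assume f: "f \<in> l1"
    have "l1Tnorm (splitting e f) \<le> l1norm (conv f e) * l1norm (delta 0)"
      unfolding splitting_def by (intro tensor_in_l1T conv_in_l1 f assms delta_in_l1)
    also have "\<dots> \<le> l1norm (conv f e)"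
      using l1norm_delta_le[of 0] l1norm_nonneg[of "conv f e"] by (simp add: mult_left_le)
    also have "\<dots> \<le> l1norm e * l1norm f"
      using conv_in_l1(2)[OF f assms] by (simp add: mult.commute)
    finally show "l1Tnorm (splitting e f) \<le> l1norm e * l1norm f" .
  qed
qed

lemma splitting_lact: "lact a (splitting e x) = splitting e (conv a x)"
  unfolding splitting_def lact_tensor conv_assoc ..

lemma piA_splitting: "piA (splitting e x) = conv x e"
  unfolding splitting_def piA_tensor conv_delta_zero_right ..

lemma l1Tnorm_splitting_defect_le:
  assumes a: "a \<in> l1" and x: "x \<in> l1" and e: "e \<in> l1"
  shows "l1Tnorm (\<lambda>p. splitting e (conv x a) p - c * splitting e x p)
    \<le> l1norm x * l1norm (\<lambda>k. conv a e k - c * e k)"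
proof -
  define D where "D = (\<lambda>k. conv a e k - c * e k)"
  have D: "D \<in> l1"
    unfolding D_def by (intro l1_diff l1_cmult conv_in_l1 a e)
  have "conv x D = (\<lambda>k. conv (conv x a) e k - c * conv x e k)"
    by (rule psum_inject) (simp add: D_def psum_conv psum_diff psum_cmult algebra_simps)
  then have eq: "(\<lambda>p. splitting e (conv x a) p - c * splitting e x p) = tensor (conv x D) (delta 0)"
    unfolding splitting_def tensor_def by (auto simp: algebra_simps)
  have "l1Tnorm (tensor (conv x D) (delta 0)) \<le> l1norm (conv x D) * l1norm (delta 0)"
    by (intro tensor_in_l1T conv_in_l1 x D delta_in_l1)
  also have "\<dots> \<le> l1norm (conv x D)"
    using l1norm_delta_le[of 0] l1norm_nonneg[of "conv x D"] by (simp add: mult_left_le)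
  also have "\<dots> \<le> l1norm x * l1norm D"
    by (rule conv_in_l1(2)[OF x D])
  finally show ?thesis
    unfolding eq D_def .
qed

lemma approx_left_phi_biprojectiveI:
  assumes ch: "character \<phi>"
    and e: "\<And>N. e N \<in> l1" "\<And>N. \<phi> (e N) = 1"
    and mean: "\<And>a. a \<in> l1 \<Longrightarrow> (\<lambda>N. l1norm (\<lambda>k. conv a (e N) k - \<phi> a * e N k)) \<longlonglongrightarrow> 0"
  shows "approx_left_phi_biprojective \<phi>"
  unfolding approx_left_phi_biprojective_def
proof (intro exI conjI ballI)
  let ?F = "filtermap (\<lambda>N. splitting (e N)) sequentially"
  show "?F \<noteq> bot"
    by (simp add: filtermap_bot_iff)
  show "eventually bdd_lin ?F"
    by (simp add: eventually_filtermap bdd_lin_splitting e)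
  fix a x assume a: "a \<in> l1" and x: "x \<in> l1"
  show "((\<lambda>\<rho>. l1Tnorm (\<lambda>p. lact a (\<rho> x) p - \<rho> (conv a x) p)) \<longlongrightarrow> 0) ?F"
    by (simp add: filterlim_filtermap o_def splitting_lact l1Tnorm_def)
  show "((\<lambda>\<rho>. \<phi> (piA (\<rho> x)) - \<phi> x) \<longlongrightarrow> 0) ?F"
    by (simp add: filterlim_filtermap o_def piA_splitting character_conv[OF ch x e(1)] e(2))
  show "((\<lambda>\<rho>. l1Tnorm (\<lambda>p. \<rho> (conv x a) p - \<phi> a * \<rho> x p)) \<longlongrightarrow> 0) ?F"
    unfolding filterlim_filtermap o_def
  proof (rule tendsto_sandwich[OF _ _ tendsto_const])
    show "(\<lambda>N. l1norm x * l1norm (\<lambda>k. conv a (e N) k - \<phi> a * e N k)) \<longlonglongrightarrow> 0"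
      using tendsto_mult_right_zero[OF mean[OF a]] .
  qed (simp_all add: l1Tnorm_nonneg l1Tnorm_splitting_defect_le a x e)
qed

lemma approx_left_phi_biprojective_last_index:
  assumes ch: "character \<phi>" and "\<phi> (delta m) = 1" "\<phi> (delta (Suc m)) = 0"
  shows "approx_left_phi_biprojective \<phi>"
proof -
  define e where "e = (\<lambda>k. delta m k - delta (Suc m) k)"
  have e: "e \<in> l1" "\<phi> e = 1"
    unfolding e_def using character_diff[OF ch delta_in_l1 delta_in_l1] assms(2,3)
    by (simp_all add: l1_diff delta_in_l1)
  have conv_e: "conv a e = (\<lambda>k. psum a m * e k)" for a
  proof (rule psum_inject)
    fix K
    show "psum (conv a e) K = psum (\<lambda>k. psum a m * e k) K"
      by (cases "K = m") (auto simp: psum_conv psum_cmult e_def psum_diff psum_delta)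
  qed
  have "\<phi> a = psum a m" if "a \<in> l1" for a
    using character_conv[OF ch that e(1)] character_cmult[OF ch e(1), of "psum a m"] e(2)
    by (simp add: conv_e)
  then show ?thesis
    by (intro approx_left_phi_biprojectiveI[OF ch, of "\<lambda>N. e"] e) (simp add: conv_e l1norm_def)
qed

text \<open>Here \<open>a \<delta>\<^sub>N - \<phi>(a) \<delta>\<^sub>N\<close> is \<open>psum a N - \<Sum> a\<close> at \<open>N\<close> and the tail of \<open>a\<close> beyond \<open>N\<close>.\<close>

lemma approx_left_phi_biprojective_full_sum:
  assumes ch: "character \<phi>" and all1: "\<And>i. \<phi> (delta i) = 1"
  shows "approx_left_phi_biprojective \<phi>"
proof (rule approx_left_phi_biprojectiveI[OF ch, of delta])
  fix a :: "nat \<Rightarrow> complex" assume a: "a \<in> l1"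
  define L where "L = infsum a UNIV"
  have \<phi>a: "\<phi> a = L"
    unfolding L_def by (rule character_eq_infsum[OF ch all1 a])
  define B where "B = (\<lambda>N. cmod (psum a N - L) + (l1norm a - (\<Sum>k\<le>N. cmod (a k))))"
  have le: "l1norm (\<lambda>k. conv a (delta N) k - \<phi> a * delta N k) \<le> B N" for N
  proof (rule l1_finite_sums_bounded(2))
    fix K
    have "(\<Sum>k\<le>K. cmod (conv a (delta N) k - \<phi> a * delta N k))
       = (\<Sum>k\<le>K. if k = N then cmod (psum a N - L) else 0) + (\<Sum>k\<le>K. if N < k then cmod (a k) else 0)"
      unfolding sum.distrib[symmetric] by (rule sum.cong) (auto simp: conv_delta_right \<phi>a delta_apply)
    also have "\<dots> \<le> B N"
      unfolding B_def by (intro add_mono sum_tail_le_l1norm a) simp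
    finally show "(\<Sum>k\<le>K. cmod (conv a (delta N) k - \<phi> a * delta N k)) \<le> B N" .
  qed
  have "(\<lambda>N. psum a N - L) \<longlonglongrightarrow> 0"
    using psum_tendsto_infsum[OF l1_summable_on[OF a]] unfolding L_def by (rule LIM_zero)
  then have "B \<longlonglongrightarrow> 0 + 0"
    unfolding B_def by (intro tendsto_add tendsto_norm_zero l1_tail_tendsto_zero a)
  then have "B \<longlonglongrightarrow> 0"
    by simp
  then show "(\<lambda>N. l1norm (\<lambda>k. conv a (delta N) k - \<phi> a * delta N k)) \<longlonglongrightarrow> 0"
    by (rule tendsto_sandwich[OF _ _ tendsto_const, rotated 2]) (simp_all add: le l1norm_nonneg)
qed (use delta_in_l1 all1 in auto)

lemma approx_left_character_biprojective_holds: approx_left_character_biprojective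
  unfolding approx_left_character_biprojective_def
proof (intro allI impI)
  fix \<phi> assume ch: "character \<phi>"
  show "approx_left_phi_biprojective \<phi>"
  proof (cases rule: character_delta_cases[OF ch])
    case 1
    then show ?thesis by (rule approx_left_phi_biprojective_full_sum[OF ch])
  next
    case (2 m)
    then show ?thesis by (rule approx_left_phi_biprojective_last_index[OF ch])
  qed
qed

subsection \<open>The character \<open>\<phi>\<^sub>\<infinity>\<close>\<close>

lemma phi_None: "phi None f = infsum f UNIV"
  by (simp add: phi_def)

lemma infsum_l1_eq_lim_psum: "f \<in> l1 \<Longrightarrow> psum f \<longlonglongrightarrow> L \<Longrightarrow> infsum f UNIV = L"
  using psum_tendsto_infsum[OF l1_summable_on] LIMSEQ_unique by blast

lemma infsum_delta_zero: "infsum (delta 0) UNIV = 1"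
  by (rule infsum_l1_eq_lim_psum[OF delta_in_l1]) (simp add: psum_delta[abs_def])

lemma character_phi_None: "character (phi None)"
  unfolding character_def phi_None
proof (intro conjI ballI allI)
  fix f g :: "nat \<Rightarrow> complex" assume f: "f \<in> l1" and g: "g \<in> l1"
  show "infsum (\<lambda>n. f n + g n) UNIV = infsum f UNIV + infsum g UNIV"
    by (rule infsum_add) (use f g l1_summable_on in auto)
  have "psum (conv f g) \<longlonglongrightarrow> infsum f UNIV * infsum g UNIV"
    unfolding psum_conv[abs_def] by (intro tendsto_mult psum_tendsto_infsum l1_summable_on f g)
  then show "infsum (conv f g) UNIV = infsum f UNIV * infsum g UNIV"
    by (intro infsum_l1_eq_lim_psum conv_in_l1 f g)
next
  fix c :: complex and f :: "nat \<Rightarrow> complex"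
  show "infsum (\<lambda>n. c * f n) UNIV = c * infsum f UNIV"
    by (rule infsum_cmult_right')
next
  show "\<exists>f\<in>l1. infsum f UNIV \<noteq> 0"
    by (intro bexI[of _ "delta 0"]) (simp_all add: delta_in_l1 infsum_delta_zero)
qed

lemma psum_piA_eq_last_column:
  assumes comm: "\<And>j. lact (delta j) G = ract G (delta j)"
  shows "psum (piA G) K = (\<Sum>i\<le>K. G (i, K))"
proof -
  have column: "(\<Sum>i\<le>j. G (i, l)) = 0" if "l < j" for l j
  proof -
    have "lact (delta j) G (j, l) = (\<Sum>i\<le>j. G (i, l))"
      unfolding lact_def by (simp add: sum_maxpairs delta_apply)
    moreover have "ract G (delta j) (j, l) = 0"
      unfolding ract_def using that by (simp add: sum_maxpairs delta_apply)
    ultimately show ?thesis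
      using comm[of j] by simp
  qed
  have "psum (piA G) K = (\<Sum>i\<le>K. \<Sum>l\<le>K. G (i, l))"
    unfolding psum_def piA_def by (simp add: case_prod_beta sum_sum_maxpairs sum.cartesian_product)
  also have "\<dots> = (\<Sum>l\<le>K. \<Sum>i\<le>K. G (i, l))"
    by (rule sum.swap)
  also have "\<dots> = (\<Sum>l\<le>K. if l = K then (\<Sum>i\<le>K. G (i, K)) else 0)"
    by (rule sum.cong) (auto simp: column)
  finally show ?thesis
    by simp
qed

lemma l1T_last_column_tendsto_zero:
  assumes "G \<in> l1T"
  shows "(\<lambda>K. \<Sum>i\<le>K. G (i, K)) \<longlonglongrightarrow> 0"
proof -
  define s where "s = (\<lambda>K. \<Sum>p\<in>{..K} \<times> {..K}. cmod (G p))"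
  have "incseq s"
    unfolding s_def by (rule incseq_SucI, rule sum_mono2) auto
  moreover have "s K \<le> l1Tnorm G" for K
    unfolding s_def l1Tnorm_def
    by (rule finite_sum_le_infsum) (use assms in \<open>auto simp: l1T_def\<close>)
  ultimately obtain l where "s \<longlonglongrightarrow> l"
    by (meson incseq_convergent)
  then have increments: "(\<lambda>K. s (Suc K) - s K) \<longlonglongrightarrow> 0"
    using tendsto_diff[OF LIMSEQ_Suc] by fastforce
  have "cmod (\<Sum>i\<le>Suc K. G (i, Suc K)) \<le> s (Suc K) - s K" for K
  proof -
    have "s K + (\<Sum>i\<le>Suc K. cmod (G (i, Suc K)))
        = (\<Sum>p\<in>{..K} \<times> {..K} \<union> (\<lambda>i. (i, Suc K)) ` {..Suc K}. cmod (G p))"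
      unfolding s_def by (subst sum.union_disjoint) (auto simp: sum.reindex inj_on_def)
    also have "\<dots> \<le> s (Suc K)"
      unfolding s_def by (rule sum_mono2) auto
    finally show ?thesis
      using norm_sum[of "\<lambda>i. G (i, Suc K)" "{..Suc K}"] by linarith
  qed
  then have "(\<lambda>K. \<Sum>i\<le>Suc K. G (i, Suc K)) \<longlonglongrightarrow> 0"
    by (intro Lim_null_comparison[OF _ increments] always_eventually allI)
  then show ?thesis
    by (rule LIMSEQ_imp_Suc)
qed

lemma not_phi_biprojective_phi_None: "\<not> phi_biprojective (phi None)"
proof
  assume "phi_biprojective (phi None)"
  then obtain \<rho> where bl: "bdd_lin \<rho>"
    and bimod: "\<And>a x. a \<in> l1 \<Longrightarrow> x \<in> l1 \<Longrightarrow> \<rho> (conv a x) = lact a (\<rho> x) \<and> \<rho> (conv x a) = ract (\<rho> x) a"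
    and proj: "\<And>a. a \<in> l1 \<Longrightarrow> phi None (piA (\<rho> a)) = phi None a"
    unfolding phi_biprojective_def by blast
  define G where "G = \<rho> (delta 0)"
  have "G \<in> l1T"
    using bl delta_in_l1 unfolding bdd_lin_def G_def by blast
  have "lact (delta j) G = ract G (delta j)" for j
  proof -
    have "\<rho> (conv (delta j) (delta 0)) = lact (delta j) G"
      "\<rho> (conv (delta 0) (delta j)) = ract G (delta j)"
      using bimod[OF delta_in_l1 delta_in_l1, of j 0] unfolding G_def by auto
    then show ?thesis
      by (simp add: conv_delta_delta)
  qed
  then have "psum (piA G) = (\<lambda>K. \<Sum>i\<le>K. G (i, K))"
    by (simp add: fun_eq_iff psum_piA_eq_last_column)
  then have "psum (piA G) \<longlonglongrightarrow> 0"
    using l1T_last_column_tendsto_zero[OF \<open>G \<in> l1T\<close>] by simp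
  then have "phi None (piA G) = 0"
    unfolding phi_None
    by (metis LIMSEQ_unique infsum_not_exists psum_tendsto_infsum)
  moreover have "phi None (piA G) = 1"
    using proj[OF delta_in_l1] infsum_delta_zero unfolding G_def phi_None by simp
  ultimately show False
    by simp
qed

theorem mainTheorem18:
  shows "approx_left_character_biprojective \<and>
         approx_left_phi_biprojective (phi None) \<and>
         \<not> phi_biprojective (phi None)"
proof (intro conjI)
  show "approx_left_phi_biprojective (phi None)"
    using approx_left_character_biprojective_holds character_phi_None
    unfolding approx_left_character_biprojective_def by blast
qed (fact approx_left_character_biprojective_holds not_phi_biprojective_phi_None)+

end
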